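(* Let $\lambda$ be an uncountable regular cardinal, $S\subseteq S^\lambda_\omega$ stationary, and $\vec C=\langle C_\delta\mid\delta\in S\rangle$ a club-guessing sequence on $S$. Let $n<\omega$ and let $t:2n\to 2$ be a disjoint type of length $n$. Then there are $\gamma<\delta$, both in $S$, such that $C_\gamma[n]$ and $C_\delta[n]$ are disjoint and $\mathrm{tp}(C_\gamma[n],C_\delta[n])=t$.
   Context: $S^\lambda_\omega=\{\alpha<\lambda\mid\mathrm{cf}(\alpha)=\omega\}$. A club-guessing sequence on $S\subseteq S^\lambda_\omega$ is a sequence $\langle C_\delta\mid\delta\in S\rangle$ such that each $C_\delta$ is a club in $\delta$ of order type $\omega$, and for every club $D\subseteq\lambda$ there are stationarily many $\delta\in S$ with $C_\delta\subseteq D$. For a set of ordinals $A$ and $i<\mathrm{otp}(A)$, $A(i)$ is the unique $\alpha\in A$ with $\mathrm{otp}(A\cap\alpha)=i$, and for $I\subseteq\mathrm{otp}(A)$, $A[I]=\{A(i)\mid i\in I\}$; here $n=\{0,\dots,n-1\}$, so $C_\delta[n]$ is the set of the first $n$ elements of $C_\delta$. A disjoint type of length $n$ is a function $t:2n\to 2$ taking the value $0$ exactly $n$ times and the value $1$ exactly $n$ times. For disjoint $n$-element sets of ordinals $a,b$, $\mathrm{tp}(a,b)$ is the unique disjoint type $t$ of length $n$ such that, enumerating $a\cup b$ increasingly as $\alpha_0<\dots<\alpha_{2n-1}$, we have $a=\{\alpha_i\mid t(i)=0\}$ and $b=\{\alpha_i\mid t(i)=1\}$. *)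

theory Defs
  imports Main "HOL-Library.Countable_Set"
begin

text \<open>The cardinal lambda is modelled as the set of ordinals below it, i.e. as a
well-ordered type 'a (elements of 'a = ordinals alpha < lambda).\<close>

definition unbounded :: "'a::wellorder set \<Rightarrow> bool" where
  "unbounded X \<longleftrightarrow> (\<forall>a. \<exists>x\<in>X. a \<le> x)"

text \<open>lambda (= order type of 'a) is an uncountable regular cardinal:
 uncountable; every proper initial segment has strictly smaller cardinality
 (so the order type is a cardinal); every unbounded subset has full
 cardinality (regularity).\<close>
definition uncountable_regular_cardinal :: "'a::wellorder itself \<Rightarrow> bool" where
  "uncountable_regular_cardinal _ \<longleftrightarrow>
     \<not> countable (UNIV :: 'a set) \<and>
     (\<forall>a::'a. \<not> (\<exists>f::'a \<Rightarrow> 'a. inj f \<and> range f \<subseteq> {..<a})) \<and>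
     (\<forall>X::'a set. unbounded X \<longrightarrow> (\<exists>f::'a \<Rightarrow> 'a. inj f \<and> range f \<subseteq> X))"

definition club :: "'a::wellorder set \<Rightarrow> bool" where
  "club D \<longleftrightarrow> unbounded D \<and>
     (\<forall>\<alpha>. (\<exists>b. b < \<alpha>) \<and> (\<forall>b<\<alpha>. \<exists>d\<in>D. b < d \<and> d < \<alpha>) \<longrightarrow> \<alpha> \<in> D)"

definition stationary :: "'a::wellorder set \<Rightarrow> bool" where
  "stationary S \<longleftrightarrow> (\<forall>D. club D \<longrightarrow> S \<inter> D \<noteq> {})"

definition cof_omega :: "'a::wellorder \<Rightarrow> bool" where
  "cof_omega \<alpha> \<longleftrightarrow> (\<exists>f::nat \<Rightarrow> 'a. strict_mono f \<and> (\<forall>n. f n < \<alpha>) \<and>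
                         (\<forall>b<\<alpha>. \<exists>n. b < f n))"

definition club_in :: "'a::wellorder \<Rightarrow> 'a set \<Rightarrow> bool" where
  "club_in \<delta> C \<longleftrightarrow> C \<subseteq> {..<\<delta>} \<and> (\<forall>b<\<delta>. \<exists>c\<in>C. b < c) \<and>
     (\<forall>\<alpha><\<delta>. (\<exists>b. b < \<alpha>) \<and> (\<forall>b<\<alpha>. \<exists>c\<in>C. b < c \<and> c < \<alpha>) \<longrightarrow> \<alpha> \<in> C)"

definition otp_omega :: "'a::wellorder set \<Rightarrow> bool" where
  "otp_omega C \<longleftrightarrow> (\<exists>f::nat \<Rightarrow> 'a. strict_mono f \<and> range f = C)"

definition club_guessing :: "'a::wellorder set \<Rightarrow> ('a \<Rightarrow> 'a set) \<Rightarrow> bool" where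
  "club_guessing S C \<longleftrightarrow>
     (\<forall>\<delta>\<in>S. club_in \<delta> (C \<delta>) \<and> otp_omega (C \<delta>)) \<and>
     (\<forall>D. club D \<longrightarrow> stationary {\<delta>\<in>S. C \<delta> \<subseteq> D})"

text \<open>A[n]: the elements A(i) with i < n, i.e. those a in A with
 otp(A \<inter> a) = i < n (otp of a finite set is its cardinality).\<close>
definition first_n :: "'a::wellorder set \<Rightarrow> nat \<Rightarrow> 'a set" where
  "first_n A n = {a\<in>A. finite {b\<in>A. b < a} \<and> card {b\<in>A. b < a} < n}"

definition disjoint_type :: "nat \<Rightarrow> (nat \<Rightarrow> nat) \<Rightarrow> bool" where
  "disjoint_type n t \<longleftrightarrow> (\<forall>i<2*n. t i \<in> {0,1}) \<and>
     card {i. i < 2*n \<and> t i = 0} = n \<and> card {i. i < 2*n \<and> t i = 1} = n"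

definition tp :: "'a::wellorder set \<Rightarrow> 'a set \<Rightarrow> nat \<Rightarrow> nat" where
  "tp a b i = (if sorted_list_of_set (a \<union> b) ! i \<in> a then 0 else 1)"

end

theory Submission
  imports Defs
begin

text \<open>Call a finite set \<open>P\<close> guessable if for every club \<open>D\<close> some \<open>\<gamma> \<in> S\<close> has \<open>P\<close>
  as an initial segment of \<open>C\<^sub>\<gamma>\<close> with the rest of \<open>C\<^sub>\<gamma>\<close> inside \<open>D\<close>. The empty set is
  guessable because \<open>C\<close> guesses clubs. A guessable \<open>P\<close> has a guessable extension
  \<open>P \<union> {a}\<close> with \<open>a\<close> above \<open>P\<close> and above any prescribed bound: otherwise choose, for
  every \<open>a\<close>, a club \<open>E\<^sub>a\<close> refuting \<open>P \<union> {a}\<close>; a \<open>\<gamma>\<close> guessing the diagonal intersection of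
  the \<open>E\<^sub>a\<close> beyond \<open>P\<close> refutes itself at the next element \<open>a\<close> of \<open>C\<^sub>\<gamma>\<close>.
  Adding points one at a time, to \<open>A\<close> or to \<open>B\<close> as \<open>t\<close> prescribes, yields
  guessable \<open>A\<close> and \<open>B\<close> with \<open>tp(A, B) = t\<close>. Now \<open>A = C\<^sub>\<gamma>[n]\<close> for some \<open>\<gamma>\<close>, and guessing
  the club \<open>(\<gamma>, \<lambda>)\<close> gives \<open>\<delta>\<close> with \<open>B = C\<^sub>\<delta>[n]\<close> and \<open>C\<^sub>\<delta>\<close> reaching above \<open>\<gamma>\<close>, so \<open>\<gamma> < \<delta>\<close>.\<close>

lemma regular_countable_bounded:
  assumes "uncountable_regular_cardinal TYPE('a::wellorder)" and "countable (X::'a set)"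
  shows "\<exists>b. \<forall>y\<in>X. y < b"
proof (rule ccontr)
  assume "\<not> ?thesis"
  hence "unbounded X" unfolding unbounded_def by (auto simp: not_less)
  with assms obtain f :: "'a \<Rightarrow> 'a" where "inj f" "range f \<subseteq> X"
    unfolding uncountable_regular_cardinal_def by blast
  hence "countable (UNIV :: 'a set)"
    using assms(2) by (metis countable_image_inj_on countable_subset)
  with assms show False unfolding uncountable_regular_cardinal_def by blast
qed

lemma regular_gt_ex:
  assumes "uncountable_regular_cardinal TYPE('a::wellorder)"
  shows "\<exists>y. (x::'a) < y"
  using regular_countable_bounded[OF assms, of "{x}"] by auto

lemma regular_image_lessThan_bounded:
  assumes "uncountable_regular_cardinal TYPE('a::wellorder)"
  shows "\<exists>b. \<forall>a<(x::'a). (h a::'a) < b"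
proof (rule ccontr)
  assume "\<not> ?thesis"
  hence "unbounded (h ` {..<x})" unfolding unbounded_def by (auto simp: not_less)
  with assms obtain f :: "'a \<Rightarrow> 'a" where f: "inj f" "range f \<subseteq> h ` {..<x}"
    unfolding uncountable_regular_cardinal_def by blast
  define g where "g = inv_into {..<x} h \<circ> f"
  have f_in: "f u \<in> h ` {..<x}" for u using f(2) by blast
  have "range g \<subseteq> {..<x}"
    unfolding g_def using inv_into_into[OF f_in] by auto
  moreover have "inj g"
  proof (rule injI)
    fix u v assume "g u = g v"
    hence "h (g u) = h (g v)" by simp
    hence "f u = f v" unfolding g_def using f_inv_into_f[OF f_in] by simp
    with f(1) show "u = v" by (rule injD)
  qed
  ultimately show False
    using assms unfolding uncountable_regular_cardinal_def by blast
qed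

lemma regular_omega_limit_ex:
  assumes "uncountable_regular_cardinal TYPE('a::wellorder)" and "strict_mono (x :: nat \<Rightarrow> 'a)"
  shows "\<exists>L. (\<forall>k. x k < L) \<and> (\<forall>b<L. \<exists>k. b < x k)"
proof -
  obtain B where "\<forall>y\<in>range x. y < B"
    using regular_countable_bounded[OF assms(1), of "range x"] by auto
  hence bound: "\<forall>k. x k \<le> B" by (auto intro: less_imp_le)
  define L where "L = (LEAST z. \<forall>k. x k \<le> z)"
  have "\<forall>k. x k \<le> L" unfolding L_def using bound by (rule LeastI)
  hence "x k < L" for k
    using strict_monoD[OF assms(2), of k "Suc k"] by (meson lessI less_le_trans)
  moreover have "\<exists>k. b < x k" if "b < L" for b
    using that not_less_Least[of b "\<lambda>z. \<forall>k. x k \<le> z"] unfolding L_def by (auto simp: not_le)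
  ultimately show ?thesis by blast
qed

lemma club_UNIV: "club (UNIV :: 'a::wellorder set)"
  unfolding club_def unbounded_def by auto

lemma club_greaterThan:
  assumes "uncountable_regular_cardinal TYPE('a::wellorder)"
  shows "club {(\<gamma>::'a)<..}"
  unfolding club_def unbounded_def
proof (intro conjI allI impI)
  fix a obtain y where "max a \<gamma> < y" using regular_gt_ex[OF assms] by blast
  thus "\<exists>x\<in>{\<gamma><..}. a \<le> x" by (auto intro!: bexI[of _ y])
qed auto

lemma club_closedD:
  assumes "club D" and "b < \<alpha>" and "\<forall>b<\<alpha>. \<exists>d\<in>D. b < d \<and> d < \<alpha>"
  shows "\<alpha> \<in> D"
  using assms unfolding club_def by blast

definition diag_Inter :: "('a::wellorder \<Rightarrow> 'a set) \<Rightarrow> 'a set" where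
  "diag_Inter D = {x. \<forall>a<x. x \<in> D a}"

lemma diag_Inter_closed:
  assumes "\<And>a. club (D a)" and "b < \<alpha>"
    and lim: "\<forall>b<\<alpha>. \<exists>d\<in>{\<xi><..} \<inter> diag_Inter D. b < d \<and> d < \<alpha>"
  shows "\<alpha> \<in> {\<xi><..} \<inter> diag_Inter D"
proof -
  have "\<xi> < \<alpha>" using lim \<open>b < \<alpha>\<close> by fastforce
  moreover have "\<alpha> \<in> D a" if "a < \<alpha>" for a
  proof (rule club_closedD[OF assms(1) that], intro allI impI)
    fix c assume "c < \<alpha>"
    then obtain d where "d \<in> diag_Inter D" "max a c < d" "d < \<alpha>"
      using lim \<open>a < \<alpha>\<close> by (metis IntD2 max_less_iff_conj)
    thus "\<exists>d\<in>D a. c < d \<and> d < \<alpha>" unfolding diag_Inter_def by auto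
  qed
  ultimately show ?thesis unfolding diag_Inter_def by blast
qed

lemma regular_jump_ex:
  assumes R: "uncountable_regular_cardinal TYPE('a::wellorder)"
    and unb: "\<And>a. unbounded (D a :: 'a set)"
  shows "\<exists>s. \<forall>y. y < s y \<and> (\<forall>a<y. \<exists>d\<in>D a. y < d \<and> d < s y)"
proof -
  have "\<exists>d. d \<in> D a \<and> y < d" for a y
  proof -
    obtain y' where "y < y'" using regular_gt_ex[OF R] by blast
    moreover obtain d where "d \<in> D a" "y' \<le> d" using unb[of a] unfolding unbounded_def by blast
    ultimately show ?thesis by (blast intro: less_le_trans)
  qed
  define nxt where "nxt a y = (SOME d. d \<in> D a \<and> y < d)" for a y
  have nxt: "nxt a y \<in> D a \<and> y < nxt a y" for a y
    unfolding nxt_def by (rule someI_ex) fact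
  have "\<exists>z. y < z \<and> (\<forall>a<y. nxt a y < z)" for y
  proof -
    obtain b where b: "\<forall>a<y. nxt a y < b"
      using regular_image_lessThan_bounded[OF R, of y "\<lambda>a. nxt a y"] by blast
    obtain c where "y < c" using regular_gt_ex[OF R] by blast
    with b have "y < max b c \<and> (\<forall>a<y. nxt a y < max b c)" by (simp add: less_max_iff_disj)
    thus ?thesis ..
  qed
  define s where "s y = (SOME z. y < z \<and> (\<forall>a<y. nxt a y < z))" for y
  have "y < s y \<and> (\<forall>a<y. nxt a y < s y)" for y
    unfolding s_def by (rule someI_ex) fact
  with nxt show ?thesis by blast
qed

lemma diag_Inter_unbounded:
  assumes R: "uncountable_regular_cardinal TYPE('a::wellorder)" and "\<And>a. club (D a :: 'a set)"
  shows "unbounded ({\<xi><..} \<inter> diag_Inter D)"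
  unfolding unbounded_def
proof
  fix \<beta>
  obtain s where s: "\<And>y. y < s y \<and> (\<forall>a<y. \<exists>d\<in>D a. y < d \<and> d < s y)"
    using regular_jump_ex[OF R] assms(2) unfolding club_def by blast
  obtain c where "\<xi> < c" using regular_gt_ex[OF R] by blast
  define x where "x k = (s ^^ k) (max c \<beta>)" for k
  have x_Suc: "x (Suc k) = s (x k)" for k unfolding x_def by simp
  have "strict_mono x" unfolding strict_mono_Suc_iff by (simp add: x_Suc s)
  then obtain L where below: "\<forall>k. x k < L" and lim: "\<forall>b<L. \<exists>k. b < x k"
    using regular_omega_limit_ex[OF R] by blast
  have "max c \<beta> < L" using below[rule_format, of 0] unfolding x_def by simp
  hence "\<xi> < L" "\<beta> \<le> L" using \<open>\<xi> < c\<close> by auto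
  moreover have "L \<in> D a" if "a < L" for a
  proof (rule club_closedD[OF assms(2) that], intro allI impI)
    fix b assume "b < L"
    then obtain k where "a < x k" "b < x k"
      using lim \<open>a < L\<close> by (metis max_less_iff_conj)
    then obtain d where "d \<in> D a" "x k < d" "d < x (Suc k)" using s x_Suc by metis
    thus "\<exists>d\<in>D a. b < d \<and> d < L" using \<open>b < x k\<close> below by (meson less_trans)
  qed
  ultimately show "\<exists>z\<in>{\<xi><..} \<inter> diag_Inter D. \<beta> \<le> z" unfolding diag_Inter_def by blast
qed

lemma club_diag_Inter:
  assumes "uncountable_regular_cardinal TYPE('a::wellorder)" and "\<And>a. club (D a :: 'a set)"
  shows "club ({\<xi><..} \<inter> diag_Inter D)"
  unfolding club_def
  using diag_Inter_unbounded[where D = D, OF assms] diag_Inter_closed[where D = D, OF assms(2)]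
  by blast

lemma first_n_range:
  assumes "strict_mono (f :: nat \<Rightarrow> 'a::wellorder)"
  shows "first_n (range f) j = f ` {..<j}"
proof -
  have "{b\<in>range f. b < f i} = f ` {..<i}" for i
    using assms by (auto simp: strict_mono_less)
  moreover have "card (f ` {..<i}) = i" for i
    using strict_mono_imp_inj_on[OF assms] by (simp add: card_image inj_on_subset)
  ultimately show ?thesis unfolding first_n_def by auto
qed

lemma otp_omega_infinite:
  assumes "otp_omega C"
  shows "infinite C"
proof -
  obtain f :: "nat \<Rightarrow> 'a" where "strict_mono f" "range f = C"
    using assms unfolding otp_omega_def by blast
  thus ?thesis by (metis finite_imageD infinite_UNIV_nat strict_mono_imp_inj_on)
qed

lemma first_n_insert_next:
  assumes "otp_omega C" and "first_n C (card P) = P"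
  obtains a where "a \<in> C" "a \<notin> P" "\<forall>p\<in>P. p < a"
    "first_n C (card (insert a P)) = insert a P" "C - insert a P \<subseteq> {a<..}"
proof -
  obtain f :: "nat \<Rightarrow> 'a" where f: "strict_mono f" "range f = C"
    using assms(1) unfolding otp_omega_def by blast
  define j where "j = card P"
  have P: "P = f ` {..<j}" using assms(2) first_n_range[OF f(1)] f(2) unfolding j_def by simp
  have "f j \<notin> P" "\<forall>p\<in>P. p < f j"
    unfolding P using f(1) by (auto simp: strict_mono_less strict_mono_eq)
  moreover have "card (insert (f j) P) = Suc j"
    using \<open>f j \<notin> P\<close> unfolding j_def by (simp add: P)
  hence "first_n C (card (insert (f j) P)) = insert (f j) P"
    using first_n_range[OF f(1)] f(2) unfolding P by (simp add: lessThan_Suc)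
  moreover have "C - insert (f j) P \<subseteq> {f j<..}"
    unfolding P f(2)[symmetric] using f(1) by (auto simp: strict_mono_less not_less_iff_gr_or_eq)
  ultimately show ?thesis using that f(2) by blast
qed

definition guessable :: "'a::wellorder set \<Rightarrow> ('a \<Rightarrow> 'a set) \<Rightarrow> 'a set \<Rightarrow> bool" where
  "guessable S C P \<longleftrightarrow>
     (\<forall>D. club D \<longrightarrow> (\<exists>\<gamma>\<in>S. first_n (C \<gamma>) (card P) = P \<and> C \<gamma> - P \<subseteq> D))"

lemma guessable_empty:
  assumes "club_guessing S (C :: 'a::wellorder \<Rightarrow> 'a set)"
  shows "guessable S C {}"
  unfolding guessable_def
proof (intro allI impI)
  fix D :: "'a set" assume "club D"
  hence "stationary {\<delta>\<in>S. C \<delta> \<subseteq> D}" using assms unfolding club_guessing_def by blast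
  hence "{\<delta>\<in>S. C \<delta> \<subseteq> D} \<noteq> {}" using club_UNIV unfolding stationary_def by blast
  thus "\<exists>\<gamma>\<in>S. first_n (C \<gamma>) (card {}) = {} \<and> C \<gamma> - {} \<subseteq> D" by (auto simp: first_n_def)
qed

lemma guessable_insert:
  assumes R: "uncountable_regular_cardinal TYPE('a::wellorder)"
    and om: "\<forall>\<gamma>\<in>S. otp_omega (C \<gamma>)" and "guessable S C P"
  shows "\<exists>a. (\<xi>::'a) < a \<and> a \<notin> P \<and> (\<forall>p\<in>P. p < a) \<and> guessable S C (insert a P)"
proof -
  have "\<exists>E. club E \<and> (\<not> guessable S C (insert a P) \<longrightarrow>
          \<not> (\<exists>\<gamma>\<in>S. first_n (C \<gamma>) (card (insert a P)) = insert a P \<and> C \<gamma> - insert a P \<subseteq> E))"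
    for a using club_UNIV unfolding guessable_def by blast
  then obtain E where E: "\<And>a. club (E a)"
    "\<And>a. \<not> guessable S C (insert a P) \<Longrightarrow>
       \<not> (\<exists>\<gamma>\<in>S. first_n (C \<gamma>) (card (insert a P)) = insert a P \<and> C \<gamma> - insert a P \<subseteq> E a)"
    by metis
  obtain \<gamma> where \<gamma>: "\<gamma> \<in> S" "first_n (C \<gamma>) (card P) = P" "C \<gamma> - P \<subseteq> {\<xi><..} \<inter> diag_Inter E"
    using assms(3) club_diag_Inter[where D = E and \<xi> = \<xi>, OF R E(1)] unfolding guessable_def by blast
  obtain a where a: "a \<in> C \<gamma>" "a \<notin> P" "\<forall>p\<in>P. p < a"
    "first_n (C \<gamma>) (card (insert a P)) = insert a P" "C \<gamma> - insert a P \<subseteq> {a<..}"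
    by (rule first_n_insert_next[OF om[rule_format, OF \<gamma>(1)] \<gamma>(2)])
  have "\<xi> < a" using \<gamma>(3) a(1,2) by blast
  moreover have "C \<gamma> - insert a P \<subseteq> E a"
    using \<gamma>(3) a(5) unfolding diag_Inter_def by blast
  hence "guessable S C (insert a P)" using E(2) \<gamma>(1) a(4) by blast
  ultimately show ?thesis using a(2,3) by blast
qed

lemma guessable_sequence_extend:
  assumes R: "uncountable_regular_cardinal TYPE('a::wellorder)"
    and om: "\<forall>\<gamma>\<in>S. otp_omega (C \<gamma>)"
    and x: "strict_mono_on {..<i} (x :: nat \<Rightarrow> 'a)"
    and g: "guessable S C (x ` {k. k < i \<and> p k})" and "p i"
  shows "\<exists>a. strict_mono_on {..<Suc i} (x(i := a)) \<and>
             guessable S C (x(i := a) ` {k. k < Suc i \<and> p k})"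
proof -
  obtain a where a: "Max (x ` {..i}) < a" "guessable S C (insert a (x ` {k. k < i \<and> p k}))"
    using guessable_insert[OF R om g] by blast
  have "x k < a" if "k < i" for k
    using that a(1) by (meson Max_ge atMost_iff finite_atMost finite_imageI imageI le_less_trans
        less_imp_le)
  hence "strict_mono_on {..<Suc i} (x(i := a))"
    using x unfolding strict_mono_on_def by (auto simp: less_Suc_eq)
  moreover have "x(i := a) ` {k. k < Suc i \<and> p k} = insert a (x ` {k. k < i \<and> p k})"
    using \<open>p i\<close> by (auto simp: less_Suc_eq image_iff)
  ultimately show ?thesis using a(2) by auto
qed

lemma guessable_sequence:
  assumes R: "uncountable_regular_cardinal TYPE('a::wellorder)"
    and om: "\<forall>\<gamma>\<in>S. otp_omega (C \<gamma>)" and "guessable S C {}"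
  shows "\<exists>x :: nat \<Rightarrow> 'a. strict_mono_on {..<i} x \<and>
           guessable S C (x ` {k. k < i \<and> p k}) \<and> guessable S C (x ` {k. k < i \<and> \<not> p k})"
proof (induction i)
  case 0
  show ?case using assms(3) by (simp add: strict_mono_on_def)
next
  case (Suc i)
  then obtain x where x: "strict_mono_on {..<i} x"
    "guessable S C (x ` {k. k < i \<and> p k})" "guessable S C (x ` {k. k < i \<and> \<not> p k})"
    by blast
  have unchanged: "x(i := a) ` {k. k < Suc i \<and> q k} = x ` {k. k < i \<and> q k}"
    if "\<not> q i" for a q using that by (auto simp: less_Suc_eq image_iff)
  show ?case
  proof (cases "p i")
    case True
    then obtain a where "strict_mono_on {..<Suc i} (x(i := a))"
      "guessable S C (x(i := a) ` {k. k < Suc i \<and> p k})"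
      using guessable_sequence_extend[OF R om x(1,2) True] by blast
    moreover have "x(i := a) ` {k. k < Suc i \<and> \<not> p k} = x ` {k. k < i \<and> \<not> p k}"
      using unchanged[where q = "\<lambda>k. \<not> p k"] True by simp
    ultimately show ?thesis using x(3) by auto
  next
    case False
    then obtain a where "strict_mono_on {..<Suc i} (x(i := a))"
      "guessable S C (x(i := a) ` {k. k < Suc i \<and> \<not> p k})"
      using guessable_sequence_extend[where p = "\<lambda>k. \<not> p k", OF R om x(1,3) False] by blast
    moreover have "x(i := a) ` {k. k < Suc i \<and> p k} = x ` {k. k < i \<and> p k}"
      using unchanged[where q = p] False by simp
    ultimately show ?thesis using x(2) by auto
  qed
qed

lemma sorted_list_of_set_image_strict_mono_on:
  assumes "strict_mono_on {..<m} (x :: nat \<Rightarrow> 'a::linorder)"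
  shows "sorted_list_of_set (x ` {..<m}) = map x [0..<m]"
proof (rule sorted_list_of_set_unique[THEN iffD1])
  show "sorted_wrt (<) (map x [0..<m]) \<and> set (map x [0..<m]) = x ` {..<m} \<and>
        length (map x [0..<m]) = card (x ` {..<m})"
    using assms card_image[OF strict_mono_on_imp_inj_on[OF assms]]
    unfolding sorted_wrt_iff_nth_less strict_mono_on_def by (auto simp: atLeast0LessThan)
qed simp

lemma tp_image_partition:
  assumes "strict_mono_on {..<m} (x :: nat \<Rightarrow> 'a::wellorder)" and "i < m"
  shows "tp (x ` {k. k < m \<and> p k}) (x ` {k. k < m \<and> \<not> p k}) i = (if p i then 0 else 1)"
proof -
  have "x ` {k. k < m \<and> p k} \<union> x ` {k. k < m \<and> \<not> p k} = x ` {..<m}" by auto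
  hence "sorted_list_of_set (x ` {k. k < m \<and> p k} \<union> x ` {k. k < m \<and> \<not> p k}) ! i = x i"
    using sorted_list_of_set_image_strict_mono_on[OF assms(1)] assms(2) by simp
  moreover have "x i \<in> x ` {k. k < m \<and> p k} \<longleftrightarrow> p i"
    using strict_mono_on_eq[OF assms(1)] assms(2) by auto
  ultimately show ?thesis unfolding tp_def by simp
qed

lemma disjoint_type_image:
  assumes "disjoint_type n t" and inj: "inj_on x {..<2*n}"
  shows "card (x ` {k. k < 2*n \<and> t k = 0}) = n" and "card (x ` {k. k < 2*n \<and> t k \<noteq> 0}) = n"
    and "x ` {k. k < 2*n \<and> t k = 0} \<inter> x ` {k. k < 2*n \<and> t k \<noteq> 0} = {}"
proof -
  have "{k. k < 2*n \<and> t k \<noteq> 0} = {k. k < 2*n \<and> t k = 1}"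
    using assms(1) unfolding disjoint_type_def by force
  hence "card {k. k < 2*n \<and> t k = 0} = n" "card {k. k < 2*n \<and> t k \<noteq> 0} = n"
    using assms(1) unfolding disjoint_type_def by simp_all
  moreover have "inj_on x {k. k < 2*n \<and> q k}" for q by (rule inj_on_subset[OF inj]) auto
  ultimately show "card (x ` {k. k < 2*n \<and> t k = 0}) = n" "card (x ` {k. k < 2*n \<and> t k \<noteq> 0}) = n"
    by (simp_all only: card_image)
  have "x ` {k. k < 2*n \<and> t k = 0} \<inter> x ` {k. k < 2*n \<and> t k \<noteq> 0} =
        x ` ({k. k < 2*n \<and> t k = 0} \<inter> {k. k < 2*n \<and> t k \<noteq> 0})"
    by (rule inj_on_image_Int[OF inj, symmetric]) auto
  thus "x ` {k. k < 2*n \<and> t k = 0} \<inter> x ` {k. k < 2*n \<and> t k \<noteq> 0} = {}" by auto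
qed

lemma tp_disjoint_type:
  assumes "disjoint_type n t" and "strict_mono_on {..<2*n} (x :: nat \<Rightarrow> 'a::wellorder)" and "i < 2*n"
  shows "tp (x ` {k. k < 2*n \<and> t k = 0}) (x ` {k. k < 2*n \<and> t k \<noteq> 0}) i = t i"
  using tp_image_partition[OF assms(2,3), of "\<lambda>k. t k = 0"] assms(1,3)
  unfolding disjoint_type_def by auto

lemma club_in_less:
  assumes "club_in \<delta> C" and "otp_omega C" and "finite B" and "C - B \<subseteq> {\<gamma><..}"
  shows "\<gamma> < \<delta>"
proof -
  have "C - B \<noteq> {}" using otp_omega_infinite[OF assms(2)] assms(3) by (metis finite_Diff2 finite.emptyI)
  then obtain y where "y \<in> C - B" by blast
  thus ?thesis using assms(1,4) unfolding club_in_def by fastforce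
qed

theorem lemma3p4:
  fixes S :: "'a::wellorder set" and C :: "'a \<Rightarrow> 'a set"
    and n :: nat and t :: "nat \<Rightarrow> nat"
  assumes "uncountable_regular_cardinal TYPE('a)"
    and "S \<subseteq> {\<alpha>. cof_omega \<alpha>}"
    and "stationary S"
    and "club_guessing S C"
    and "disjoint_type n t"
  shows "\<exists>\<gamma>\<in>S. \<exists>\<delta>\<in>S. \<gamma> < \<delta> \<and>
           first_n (C \<gamma>) n \<inter> first_n (C \<delta>) n = {} \<and>
           card (first_n (C \<gamma>) n) = n \<and> card (first_n (C \<delta>) n) = n \<and>
           (\<forall>i<2*n. tp (first_n (C \<gamma>) n) (first_n (C \<delta>) n) i = t i)"
proof -
  have om: "\<forall>\<gamma>\<in>S. otp_omega (C \<gamma>)" and ci: "\<forall>\<gamma>\<in>S. club_in \<gamma> (C \<gamma>)"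
    using assms(4) unfolding club_guessing_def by auto
  obtain x where x: "strict_mono_on {..<2*n} x"
    and "guessable S C (x ` {k. k < 2*n \<and> t k = 0})" "guessable S C (x ` {k. k < 2*n \<and> t k \<noteq> 0})"
    using guessable_sequence[OF assms(1) om guessable_empty[OF assms(4)], of "2*n" "\<lambda>k. t k = 0"]
    by blast
  moreover define A B where "A = x ` {k. k < 2*n \<and> t k = 0}" and "B = x ` {k. k < 2*n \<and> t k \<noteq> 0}"
  moreover note AB = disjoint_type_image[OF assms(5) strict_mono_on_imp_inj_on[OF x], folded A_def B_def]
  ultimately have gA: "guessable S C A" and gB: "guessable S C B" and card: "card A = n" "card B = n"
    by simp_all
  obtain \<gamma> where \<gamma>: "\<gamma> \<in> S" "first_n (C \<gamma>) n = A"
    using gA club_UNIV unfolding guessable_def card by blast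
  obtain \<delta> where \<delta>: "\<delta> \<in> S" "first_n (C \<delta>) n = B" "C \<delta> - B \<subseteq> {\<gamma><..}"
    using gB club_greaterThan[OF assms(1)] unfolding guessable_def card by blast
  have "finite B" unfolding B_def by simp
  with \<delta> ci om have "\<gamma> < \<delta>" by (blast intro: club_in_less)
  moreover have "\<forall>i<2*n. tp A B i = t i"
    using tp_disjoint_type[OF assms(5) x] unfolding A_def B_def by blast
  ultimately show ?thesis using \<gamma> \<delta> AB(3) card by auto
qed

end
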